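(* Let $\mathcal{E}$ be an elementary topos with subobject classifier $\Omega$, let $\circledcirc:\Omega\to\Omega$ be a strong Löb operator, and let $f:X\to X$ be $\circledcirc$-contractive. Then $f$ is non-expansive, and hence its subobject of fixed points is a maximal subterminal one, i.e. $\mathcal{E}\models \mathsf{MaxST}(\lambda x{:}X.(x\approx f x))$.
   Context: Statements are in the internal (Mitchell–Bénabou) language of $\mathcal{E}$; $\mathcal{E}\models\phi$ means the closed formula $\phi$ is interpreted as $\mathrm{true}:1\to\Omega$. $\circledcirc$ is a strong Löb operator if $\mathcal{E}\models\forall p{:}\Omega.((\circledcirc p\Rightarrow p)\Rightarrow p)$. $f$ is $\circledcirc$-contractive if $\mathcal{E}\models\forall x,y{:}X.(\circledcirc(x\approx y)\Rightarrow f x\approx f y)$. $f$ is non-expansive if $\mathcal{E}\models\forall x,y{:}X.((f x\approx f y\Rightarrow x\approx y)\Rightarrow x\approx y)$. For $\phi:\Omega^X$: $\mathsf{SubTe}(\phi):=\forall x,y{:}X.(\phi(x)\wedge\phi(y)\Rightarrow x\approx y)$; $\phi\subseteq\psi:=\forall x{:}X.(\phi(x)\Rightarrow\psi(x))$; $\mathsf{MaxST}(\phi):=\mathsf{SubTe}(\phi)\wedge\forall\alpha{:}\Omega^X.(\mathsf{SubTe}(\alpha)\wedge\phi\subseteq\alpha\Rightarrow\alpha\subseteq\phi)$. *)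

theory Defs
  imports Main
begin

text \<open>Signature: domain, codomain, identities, composition (t_comp g f = g o f),
  terminal object with unique arrows, binary products, exponentials
  (t_exp X Y is Y^X, t_ev X Y : Y^X x X -> Y, t_lam G X h : G -> Y^X the
  transpose of h : G x X -> Y), subobject classifier true : 1 -> Omega.\<close>

record ('o, 'a) topos_sig =
  t_dom   :: "'a \<Rightarrow> 'o"
  t_cod   :: "'a \<Rightarrow> 'o"
  t_id    :: "'o \<Rightarrow> 'a"
  t_comp  :: "'a \<Rightarrow> 'a \<Rightarrow> 'a"
  t_one   :: "'o"
  t_bang  :: "'o \<Rightarrow> 'a"
  t_prod  :: "'o \<Rightarrow> 'o \<Rightarrow> 'o"
  t_pi1   :: "'o \<Rightarrow> 'o \<Rightarrow> 'a"
  t_pi2   :: "'o \<Rightarrow> 'o \<Rightarrow> 'a"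
  t_pair  :: "'a \<Rightarrow> 'a \<Rightarrow> 'a"
  t_exp   :: "'o \<Rightarrow> 'o \<Rightarrow> 'o"
  t_ev    :: "'o \<Rightarrow> 'o \<Rightarrow> 'a"
  t_lam   :: "'o \<Rightarrow> 'o \<Rightarrow> 'a \<Rightarrow> 'a"
  t_Omega :: "'o"
  t_true  :: "'a"

definition is_category :: "('o, 'a, 'z) topos_sig_scheme \<Rightarrow> bool" where
  "is_category C \<longleftrightarrow>
     (\<forall>A. t_dom C (t_id C A) = A \<and> t_cod C (t_id C A) = A) \<and>
     (\<forall>f g. t_cod C f = t_dom C g \<longrightarrow>
        t_dom C (t_comp C g f) = t_dom C f \<and> t_cod C (t_comp C g f) = t_cod C g) \<and>
     (\<forall>f. t_comp C f (t_id C (t_dom C f)) = f \<and> t_comp C (t_id C (t_cod C f)) f = f) \<and>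
     (\<forall>f g h. t_cod C f = t_dom C g \<and> t_cod C g = t_dom C h \<longrightarrow>
        t_comp C h (t_comp C g f) = t_comp C (t_comp C h g) f)"

definition is_mono :: "('o, 'a, 'z) topos_sig_scheme \<Rightarrow> 'a \<Rightarrow> bool" where
  "is_mono C m \<longleftrightarrow>
     (\<forall>g h. t_cod C g = t_dom C m \<and> t_cod C h = t_dom C m \<and> t_dom C g = t_dom C h \<and>
        t_comp C m g = t_comp C m h \<longrightarrow> g = h)"

definition is_pullback :: "('o, 'a, 'z) topos_sig_scheme \<Rightarrow> 'a \<Rightarrow> 'a \<Rightarrow> 'a \<Rightarrow> 'a \<Rightarrow> bool" where
  "is_pullback C f g p q \<longleftrightarrow>
     t_cod C f = t_cod C g \<and> t_dom C p = t_dom C q \<and>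
     t_cod C p = t_dom C f \<and> t_cod C q = t_dom C g \<and>
     t_comp C f p = t_comp C g q \<and>
     (\<forall>p' q'. t_dom C p' = t_dom C q' \<and> t_cod C p' = t_dom C f \<and> t_cod C q' = t_dom C g \<and>
        t_comp C f p' = t_comp C g q' \<longrightarrow>
        (\<exists>!u. t_dom C u = t_dom C p' \<and> t_cod C u = t_dom C p \<and>
              t_comp C p u = p' \<and> t_comp C q u = q'))"

definition is_equalizer :: "('o, 'a, 'z) topos_sig_scheme \<Rightarrow> 'a \<Rightarrow> 'a \<Rightarrow> 'a \<Rightarrow> bool" where
  "is_equalizer C e f g \<longleftrightarrow>
     t_dom C f = t_dom C g \<and> t_cod C f = t_cod C g \<and> t_cod C e = t_dom C f \<and>
     t_comp C f e = t_comp C g e \<and>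
     (\<forall>h. t_cod C h = t_dom C f \<and> t_comp C f h = t_comp C g h \<longrightarrow>
        (\<exists>!u. t_dom C u = t_dom C h \<and> t_cod C u = t_dom C e \<and> t_comp C e u = h))"

definition has_terminal :: "('o, 'a, 'z) topos_sig_scheme \<Rightarrow> bool" where
  "has_terminal C \<longleftrightarrow>
     (\<forall>A. t_dom C (t_bang C A) = A \<and> t_cod C (t_bang C A) = t_one C) \<and>
     (\<forall>A h. t_dom C h = A \<and> t_cod C h = t_one C \<longrightarrow> h = t_bang C A)"

definition has_products :: "('o, 'a, 'z) topos_sig_scheme \<Rightarrow> bool" where
  "has_products C \<longleftrightarrow>
     (\<forall>A B. t_dom C (t_pi1 C A B) = t_prod C A B \<and> t_cod C (t_pi1 C A B) = A \<and>
            t_dom C (t_pi2 C A B) = t_prod C A B \<and> t_cod C (t_pi2 C A B) = B) \<and>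
     (\<forall>f g. t_dom C f = t_dom C g \<longrightarrow>
        t_dom C (t_pair C f g) = t_dom C f \<and>
        t_cod C (t_pair C f g) = t_prod C (t_cod C f) (t_cod C g) \<and>
        t_comp C (t_pi1 C (t_cod C f) (t_cod C g)) (t_pair C f g) = f \<and>
        t_comp C (t_pi2 C (t_cod C f) (t_cod C g)) (t_pair C f g) = g \<and>
        (\<forall>h. t_dom C h = t_dom C f \<and> t_cod C h = t_prod C (t_cod C f) (t_cod C g) \<and>
             t_comp C (t_pi1 C (t_cod C f) (t_cod C g)) h = f \<and>
             t_comp C (t_pi2 C (t_cod C f) (t_cod C g)) h = g \<longrightarrow> h = t_pair C f g))"

definition has_equalizers :: "('o, 'a, 'z) topos_sig_scheme \<Rightarrow> bool" where
  "has_equalizers C \<longleftrightarrow>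
     (\<forall>f g. t_dom C f = t_dom C g \<and> t_cod C f = t_cod C g \<longrightarrow> (\<exists>e. is_equalizer C e f g))"

definition has_exponentials :: "('o, 'a, 'z) topos_sig_scheme \<Rightarrow> bool" where
  "has_exponentials C \<longleftrightarrow>
     (\<forall>X Y. t_dom C (t_ev C X Y) = t_prod C (t_exp C X Y) X \<and> t_cod C (t_ev C X Y) = Y) \<and>
     (\<forall>G X h. t_dom C h = t_prod C G X \<longrightarrow>
        t_dom C (t_lam C G X h) = G \<and> t_cod C (t_lam C G X h) = t_exp C X (t_cod C h) \<and>
        t_comp C (t_ev C X (t_cod C h))
          (t_pair C (t_comp C (t_lam C G X h) (t_pi1 C G X)) (t_pi2 C G X)) = h \<and>
        (\<forall>k. t_dom C k = G \<and> t_cod C k = t_exp C X (t_cod C h) \<and>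
             t_comp C (t_ev C X (t_cod C h))
               (t_pair C (t_comp C k (t_pi1 C G X)) (t_pi2 C G X)) = h \<longrightarrow> k = t_lam C G X h))"

definition has_subobject_classifier :: "('o, 'a, 'z) topos_sig_scheme \<Rightarrow> bool" where
  "has_subobject_classifier C \<longleftrightarrow>
     t_dom C (t_true C) = t_one C \<and> t_cod C (t_true C) = t_Omega C \<and>
     (\<forall>m. is_mono C m \<longrightarrow>
        (\<exists>!\<chi>. t_dom C \<chi> = t_cod C m \<and> t_cod C \<chi> = t_Omega C \<and>
              is_pullback C \<chi> (t_true C) m (t_bang C (t_dom C m))))"

definition elementary_topos :: "('o, 'a, 'z) topos_sig_scheme \<Rightarrow> bool" where
  "elementary_topos C \<longleftrightarrow> is_category C \<and> has_terminal C \<and> has_products C \<and>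
     has_equalizers C \<and> has_exponentials C \<and> has_subobject_classifier C"

section \<open>Mitchell--Benabou language: formulas in context G are arrows G -> Omega\<close>

definition t_char :: "('o, 'a, 'z) topos_sig_scheme \<Rightarrow> 'a \<Rightarrow> 'a" where
  "t_char C m = (THE \<chi>. t_dom C \<chi> = t_cod C m \<and> t_cod C \<chi> = t_Omega C \<and>
                       is_pullback C \<chi> (t_true C) m (t_bang C (t_dom C m)))"

definition t_truth :: "('o, 'a, 'z) topos_sig_scheme \<Rightarrow> 'o \<Rightarrow> 'a" where
  "t_truth C G = t_comp C (t_true C) (t_bang C G)"

definition conj_ar :: "('o, 'a, 'z) topos_sig_scheme \<Rightarrow> 'a" where
  "conj_ar C = t_char C (t_pair C (t_true C) (t_true C))"

definition imp_ar :: "('o, 'a, 'z) topos_sig_scheme \<Rightarrow> 'a" where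
  "imp_ar C = t_char C (SOME e. is_equalizer C e (conj_ar C) (t_pi1 C (t_Omega C) (t_Omega C)))"

definition eq_ar :: "('o, 'a, 'z) topos_sig_scheme \<Rightarrow> 'o \<Rightarrow> 'a" where
  "eq_ar C X = t_char C (t_pair C (t_id C X) (t_id C X))"

definition all_ar :: "('o, 'a, 'z) topos_sig_scheme \<Rightarrow> 'o \<Rightarrow> 'a" where
  "all_ar C X = t_char C (t_lam C (t_one C) X (t_truth C (t_prod C (t_one C) X)))"

definition fAnd :: "('o, 'a, 'z) topos_sig_scheme \<Rightarrow> 'a \<Rightarrow> 'a \<Rightarrow> 'a" where
  "fAnd C \<phi> \<psi> = t_comp C (conj_ar C) (t_pair C \<phi> \<psi>)"

definition fImp :: "('o, 'a, 'z) topos_sig_scheme \<Rightarrow> 'a \<Rightarrow> 'a \<Rightarrow> 'a" where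
  "fImp C \<phi> \<psi> = t_comp C (imp_ar C) (t_pair C \<phi> \<psi>)"

definition fEq :: "('o, 'a, 'z) topos_sig_scheme \<Rightarrow> 'a \<Rightarrow> 'a \<Rightarrow> 'a" where
  "fEq C s t = t_comp C (eq_ar C (t_cod C s)) (t_pair C s t)"

text \<open>fAll C G X \<phi>: for \<phi> in context G, x:X, the formula \<forall>x:X. \<phi> in context G.\<close>
definition fAll :: "('o, 'a, 'z) topos_sig_scheme \<Rightarrow> 'o \<Rightarrow> 'o \<Rightarrow> 'a \<Rightarrow> 'a" where
  "fAll C G X \<phi> = t_comp C (all_ar C X) (t_lam C G X \<phi>)"

definition fApp :: "('o, 'a, 'z) topos_sig_scheme \<Rightarrow> 'o \<Rightarrow> 'a \<Rightarrow> 'a \<Rightarrow> 'a" where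
  "fApp C X a t = t_comp C (t_ev C X (t_Omega C)) (t_pair C a t)"

definition holds :: "('o, 'a, 'z) topos_sig_scheme \<Rightarrow> 'a \<Rightarrow> bool" where
  "holds C \<phi> \<longleftrightarrow> \<phi> = t_true C"

definition strong_loeb :: "('o, 'a, 'z) topos_sig_scheme \<Rightarrow> 'a \<Rightarrow> bool" where
  "strong_loeb C L \<longleftrightarrow>
     (let W = t_Omega C; p = t_pi2 C (t_one C) W in
      holds C (fAll C (t_one C) W (fImp C (fImp C (t_comp C L p) p) p)))"

definition contractive :: "('o, 'a, 'z) topos_sig_scheme \<Rightarrow> 'a \<Rightarrow> 'a \<Rightarrow> bool" where
  "contractive C L f \<longleftrightarrow>
     (let X = t_dom C f; G1 = t_prod C (t_one C) X;
          x = t_comp C (t_pi2 C (t_one C) X) (t_pi1 C G1 X); y = t_pi2 C G1 X in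
      holds C (fAll C (t_one C) X (fAll C G1 X
        (fImp C (t_comp C L (fEq C x y)) (fEq C (t_comp C f x) (t_comp C f y))))))"

definition nonexpansive :: "('o, 'a, 'z) topos_sig_scheme \<Rightarrow> 'a \<Rightarrow> bool" where
  "nonexpansive C f \<longleftrightarrow>
     (let X = t_dom C f; G1 = t_prod C (t_one C) X;
          x = t_comp C (t_pi2 C (t_one C) X) (t_pi1 C G1 X); y = t_pi2 C G1 X in
      holds C (fAll C (t_one C) X (fAll C G1 X
        (fImp C (fImp C (fEq C (t_comp C f x) (t_comp C f y)) (fEq C x y)) (fEq C x y)))))"

definition SubTe :: "('o, 'a, 'z) topos_sig_scheme \<Rightarrow> 'o \<Rightarrow> 'o \<Rightarrow> 'a \<Rightarrow> 'a" where
  "SubTe C G X a =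
     (let G1 = t_prod C G X;
          x = t_comp C (t_pi2 C G X) (t_pi1 C G1 X); y = t_pi2 C G1 X;
          a2 = t_comp C (t_comp C a (t_pi1 C G X)) (t_pi1 C G1 X) in
      fAll C G X (fAll C G1 X
        (fImp C (fAnd C (fApp C X a2 x) (fApp C X a2 y)) (fEq C x y))))"

definition SubsetF :: "('o, 'a, 'z) topos_sig_scheme \<Rightarrow> 'o \<Rightarrow> 'o \<Rightarrow> 'a \<Rightarrow> 'a \<Rightarrow> 'a" where
  "SubsetF C G X a b =
     (let x = t_pi2 C G X in
      fAll C G X (fImp C (fApp C X (t_comp C a (t_pi1 C G X)) x)
                          (fApp C X (t_comp C b (t_pi1 C G X)) x)))"

definition MaxST :: "('o, 'a, 'z) topos_sig_scheme \<Rightarrow> 'o \<Rightarrow> 'o \<Rightarrow> 'a \<Rightarrow> 'a" where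
  "MaxST C G X a =
     (let P = t_exp C X (t_Omega C); G1 = t_prod C G P;
          \<alpha> = t_pi2 C G P; a1 = t_comp C a (t_pi1 C G P) in
      fAnd C (SubTe C G X a)
        (fAll C G P (fImp C (fAnd C (SubTe C G1 X \<alpha>) (SubsetF C G1 X a1 \<alpha>))
                            (SubsetF C G1 X \<alpha> a1))))"

definition fixpred :: "('o, 'a, 'z) topos_sig_scheme \<Rightarrow> 'a \<Rightarrow> 'a" where
  "fixpred C f =
     (let X = t_dom C f; x = t_pi2 C (t_one C) X in
      t_lam C (t_one C) X (fEq C x (t_comp C f x)))"

end

(*
  Everything is read through the Kripke--Joyal semantics: a formula phi : G -> Omega is valid
  iff phi o k is true for every generalized element k into G, and the connectives, the
  quantifier and internal equality then get their expected pointwise meanings.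

  In these terms non-expansiveness of f says: for generalized elements a, b of X, if
  a o j = b o j whenever f o a o j = f o b o j, then a = b.  Given such a and b, put
  q := (a \<approx> b).  Contractivity turns the Loeb hypothesis on q into f a \<approx> f b, hence into q
  itself, so the strong Loeb rule yields q.

  For the predicate of fixed points, two fixed points s, t trivially satisfy
  f s \<approx> f t \<Rightarrow> s \<approx> t, hence coincide.  If a subterminal alpha contains all fixed points and
  s is in alpha, then under the hypothesis f s \<approx> f (f s) the element f s is a fixed point,
  so it lies in alpha together with s and equals s; non-expansiveness then makes s fixed.
*)

theory Submission
  imports Defs
begin

locale topos =
  fixes C :: "('o, 'a) topos_sig"
  assumes elementary_topos: "elementary_topos C"
begin

abbreviation Dom where "Dom \<equiv> t_dom C"
abbreviation Cod where "Cod \<equiv> t_cod C"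
abbreviation arr_comp (infixr "\<cdot>" 55) where "g \<cdot> f \<equiv> t_comp C g f"
abbreviation ident where "ident \<equiv> t_id C"
abbreviation terminal ("\<one>") where "\<one> \<equiv> t_one C"
abbreviation bang where "bang \<equiv> t_bang C"
abbreviation prod_obj (infixl "\<otimes>" 70) where "A \<otimes> B \<equiv> t_prod C A B"
abbreviation \<pi>\<^sub>1 where "\<pi>\<^sub>1 \<equiv> t_pi1 C"
abbreviation \<pi>\<^sub>2 where "\<pi>\<^sub>2 \<equiv> t_pi2 C"
abbreviation pair ("\<langle>_,/ _\<rangle>") where "\<langle>f, g\<rangle> \<equiv> t_pair C f g"
abbreviation Exp where "Exp \<equiv> t_exp C"
abbreviation ev where "ev \<equiv> t_ev C"
abbreviation \<Lambda> where "\<Lambda> \<equiv> t_lam C"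
abbreviation \<Omega> where "\<Omega> \<equiv> t_Omega C"
abbreviation verum where "verum \<equiv> t_true C"
abbreviation truth where "truth \<equiv> t_truth C"

lemma category: "is_category C"
  and terminal: "has_terminal C"
  and products: "has_products C"
  and equalizers: "has_equalizers C"
  and exponentials: "has_exponentials C"
  and subobject_classifier: "has_subobject_classifier C"
  using elementary_topos unfolding elementary_topos_def by auto

lemma dom_ident [simp]: "Dom (ident A) = A"
  and cod_ident [simp]: "Cod (ident A) = A"
  using category unfolding is_category_def by auto

lemma dom_comp [simp]: "Cod f = Dom g \<Longrightarrow> Dom (g \<cdot> f) = Dom f"
  and cod_comp [simp]: "Cod f = Dom g \<Longrightarrow> Cod (g \<cdot> f) = Cod g"
  using category unfolding is_category_def by auto

lemma comp_ident_right [simp]: "Dom f = A \<Longrightarrow> f \<cdot> ident A = f"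
  and comp_ident_left [simp]: "Cod f = A \<Longrightarrow> ident A \<cdot> f = f"
  using category unfolding is_category_def by auto

lemma comp_assoc [simp]: "Cod f = Dom g \<Longrightarrow> Cod g = Dom h \<Longrightarrow> (h \<cdot> g) \<cdot> f = h \<cdot> (g \<cdot> f)"
  using category unfolding is_category_def by metis

lemma dom_bang [simp]: "Dom (bang A) = A"
  and cod_bang [simp]: "Cod (bang A) = \<one>"
  using terminal unfolding has_terminal_def by auto

lemma bang_unique: "Dom h = A \<Longrightarrow> Cod h = \<one> \<Longrightarrow> h = bang A"
  using terminal unfolding has_terminal_def by auto

lemma bang_comp [simp]: "Cod h = A \<Longrightarrow> bang A \<cdot> h = bang (Dom h)"
  by (rule bang_unique) auto

lemma bang_terminal: "bang \<one> = ident \<one>"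
  by (rule bang_unique [symmetric]) auto

lemma dom_pi1 [simp]: "Dom (\<pi>\<^sub>1 A B) = A \<otimes> B"
  and cod_pi1 [simp]: "Cod (\<pi>\<^sub>1 A B) = A"
  and dom_pi2 [simp]: "Dom (\<pi>\<^sub>2 A B) = A \<otimes> B"
  and cod_pi2 [simp]: "Cod (\<pi>\<^sub>2 A B) = B"
  using products unfolding has_products_def by auto

lemma dom_pair [simp]: "Dom f = Dom g \<Longrightarrow> Dom \<langle>f, g\<rangle> = Dom f"
  and cod_pair [simp]: "Dom f = Dom g \<Longrightarrow> Cod \<langle>f, g\<rangle> = Cod f \<otimes> Cod g"
  using products unfolding has_products_def by auto

lemma pi1_pair [simp]: "Dom f = Dom g \<Longrightarrow> Cod f = A \<Longrightarrow> Cod g = B \<Longrightarrow> \<pi>\<^sub>1 A B \<cdot> \<langle>f, g\<rangle> = f"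
  and pi2_pair [simp]: "Dom f = Dom g \<Longrightarrow> Cod f = A \<Longrightarrow> Cod g = B \<Longrightarrow> \<pi>\<^sub>2 A B \<cdot> \<langle>f, g\<rangle> = g"
  using products unfolding has_products_def by auto

lemma pair_unique:
  "Dom f = Dom g \<Longrightarrow> Dom h = Dom f \<Longrightarrow> Cod h = Cod f \<otimes> Cod g \<Longrightarrow>
   \<pi>\<^sub>1 (Cod f) (Cod g) \<cdot> h = f \<Longrightarrow> \<pi>\<^sub>2 (Cod f) (Cod g) \<cdot> h = g \<Longrightarrow> h = \<langle>f, g\<rangle>"
  using products unfolding has_products_def by blast

lemma pi1_pair_comp [simp]:
  "Dom f = Dom g \<Longrightarrow> Cod f = A \<Longrightarrow> Cod g = B \<Longrightarrow> Cod h = Dom f \<Longrightarrow> \<pi>\<^sub>1 A B \<cdot> (\<langle>f, g\<rangle> \<cdot> h) = f \<cdot> h"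
  and pi2_pair_comp [simp]:
  "Dom f = Dom g \<Longrightarrow> Cod f = A \<Longrightarrow> Cod g = B \<Longrightarrow> Cod h = Dom f \<Longrightarrow> \<pi>\<^sub>2 A B \<cdot> (\<langle>f, g\<rangle> \<cdot> h) = g \<cdot> h"
  by (simp_all flip: comp_assoc)

lemma pair_comp [simp]: "Dom f = Dom g \<Longrightarrow> Cod h = Dom f \<Longrightarrow> \<langle>f, g\<rangle> \<cdot> h = \<langle>f \<cdot> h, g \<cdot> h\<rangle>"
  by (rule pair_unique) (simp_all flip: comp_assoc)

lemma pair_proj: "Cod h = A \<otimes> B \<Longrightarrow> \<langle>\<pi>\<^sub>1 A B \<cdot> h, \<pi>\<^sub>2 A B \<cdot> h\<rangle> = h"
  by (rule pair_unique [symmetric]) auto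

lemma pair_inject:
  "Dom f = Dom g \<Longrightarrow> Dom f' = Dom g' \<Longrightarrow> Cod f = Cod f' \<Longrightarrow> Cod g = Cod g' \<Longrightarrow>
   \<langle>f, g\<rangle> = \<langle>f', g'\<rangle> \<Longrightarrow> f = f' \<and> g = g'"
  by (metis pi1_pair pi2_pair)

lemma dom_ev [simp]: "Dom (ev X Y) = Exp X Y \<otimes> X"
  and cod_ev [simp]: "Cod (ev X Y) = Y"
  using exponentials unfolding has_exponentials_def by auto

lemma dom_Lambda [simp]: "Dom h = G \<otimes> X \<Longrightarrow> Dom (\<Lambda> G X h) = G"
  and cod_Lambda [simp]: "Dom h = G \<otimes> X \<Longrightarrow> Cod (\<Lambda> G X h) = Exp X (Cod h)"
  using exponentials unfolding has_exponentials_def by auto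

lemma ev_Lambda: "Dom h = G \<otimes> X \<Longrightarrow> ev X (Cod h) \<cdot> \<langle>\<Lambda> G X h \<cdot> \<pi>\<^sub>1 G X, \<pi>\<^sub>2 G X\<rangle> = h"
  using exponentials unfolding has_exponentials_def by auto

lemma Lambda_unique:
  "Dom h = G \<otimes> X \<Longrightarrow> Dom k = G \<Longrightarrow> Cod k = Exp X (Cod h) \<Longrightarrow>
   ev X (Cod h) \<cdot> \<langle>k \<cdot> \<pi>\<^sub>1 G X, \<pi>\<^sub>2 G X\<rangle> = h \<Longrightarrow> k = \<Lambda> G X h"
  using exponentials unfolding has_exponentials_def by auto

lemma ev_Lambda_pair [simp]:
  assumes "Dom \<phi> = G \<otimes> X" "Cod h = G" "Dom t = Dom h" "Cod t = X" "Y = Cod \<phi>"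
  shows "ev X Y \<cdot> \<langle>\<Lambda> G X \<phi> \<cdot> h, t\<rangle> = \<phi> \<cdot> \<langle>h, t\<rangle>"
proof -
  have "ev X Y \<cdot> \<langle>\<Lambda> G X \<phi> \<cdot> h, t\<rangle> = (ev X Y \<cdot> \<langle>\<Lambda> G X \<phi> \<cdot> \<pi>\<^sub>1 G X, \<pi>\<^sub>2 G X\<rangle>) \<cdot> \<langle>h, t\<rangle>"
    using assms by simp
  also have "\<dots> = \<phi> \<cdot> \<langle>h, t\<rangle>"
    using ev_Lambda [of \<phi> G X] assms by simp
  finally show ?thesis .
qed

lemma Lambda_comp:
  "Dom \<phi> = G \<otimes> X \<Longrightarrow> Cod h = G \<Longrightarrow>
   \<Lambda> G X \<phi> \<cdot> h = \<Lambda> (Dom h) X (\<phi> \<cdot> \<langle>h \<cdot> \<pi>\<^sub>1 (Dom h) X, \<pi>\<^sub>2 (Dom h) X\<rangle>)"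
  by (rule Lambda_unique) auto

lemma Lambda_inject:
  "Dom \<phi> = G \<otimes> X \<Longrightarrow> Dom \<psi> = G \<otimes> X \<Longrightarrow> Cod \<phi> = Cod \<psi> \<Longrightarrow>
   \<Lambda> G X \<phi> = \<Lambda> G X \<psi> \<Longrightarrow> \<phi> = \<psi>"
  by (metis ev_Lambda)

lemma all_points_prod:
  "(\<forall>r. Cod r = G \<otimes> X \<longrightarrow> P r) \<longleftrightarrow>
   (\<forall>h s. Cod h = G \<longrightarrow> Dom s = Dom h \<longrightarrow> Cod s = X \<longrightarrow> P \<langle>h, s\<rangle>)"
  by (metis cod_comp cod_pi1 cod_pi2 dom_comp dom_pi1 dom_pi2 pair_proj cod_pair)

lemma all_points_prod_prod:
  "(\<forall>r. Cod r = G \<otimes> X \<otimes> Y \<longrightarrow> P r) \<longleftrightarrow>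
   (\<forall>h s t. Cod h = G \<longrightarrow> Dom s = Dom h \<longrightarrow> Dom t = Dom h \<longrightarrow> Cod s = X \<longrightarrow> Cod t = Y \<longrightarrow>
      P \<langle>\<langle>h, s\<rangle>, t\<rangle>)"
  unfolding all_points_prod by (auto simp: all_points_prod [where P = "\<lambda>r. \<forall>t. _ r t"])

lemma dom_verum [simp]: "Dom verum = \<one>"
  and cod_verum [simp]: "Cod verum = \<Omega>"
  using subobject_classifier unfolding has_subobject_classifier_def by auto

lemma dom_truth [simp]: "Dom (truth G) = G"
  and cod_truth [simp]: "Cod (truth G) = \<Omega>"
  unfolding t_truth_def by auto

lemma truth_comp [simp]: "Cod h = G \<Longrightarrow> truth G \<cdot> h = truth (Dom h)"
  unfolding t_truth_def by simp

lemma truth_terminal: "truth \<one> = verum"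
  unfolding t_truth_def bang_terminal by (rule comp_ident_right) simp

lemma holds_iff: "holds C \<phi> \<longleftrightarrow> \<phi> = truth \<one>"
  unfolding holds_def truth_terminal ..

lemma mono_from_terminal: "Dom m = \<one> \<Longrightarrow> is_mono C m"
  unfolding is_mono_def by (metis (no_types) bang_unique)

lemma char_classifies:
  "is_mono C m \<Longrightarrow>
   Dom (t_char C m) = Cod m \<and> Cod (t_char C m) = \<Omega> \<and> is_pullback C (t_char C m) verum m (bang (Dom m))"
  unfolding t_char_def
  by (rule theI') (use subobject_classifier in \<open>auto simp: has_subobject_classifier_def\<close>)

lemma char_unique:
  "is_mono C m \<Longrightarrow> Dom \<chi> = Cod m \<Longrightarrow> Cod \<chi> = \<Omega> \<Longrightarrow>
   is_pullback C \<chi> verum m (bang (Dom m)) \<Longrightarrow> t_char C m = \<chi>"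
  unfolding t_char_def
  by (rule the1_equality) (use subobject_classifier in \<open>auto simp: has_subobject_classifier_def\<close>)

lemma char_comp_eq_truth_iff:
  assumes m: "is_mono C m" and h: "Cod h = Cod m"
  shows "t_char C m \<cdot> h = truth (Dom h) \<longleftrightarrow> (\<exists>u. Dom u = Dom h \<and> Cod u = Dom m \<and> m \<cdot> u = h)"
proof
  have dom_char: "Dom (t_char C m) = Cod m"
    and pb: "is_pullback C (t_char C m) verum m (bang (Dom m))"
    using char_classifies [OF m] by auto
  show "\<exists>u. Dom u = Dom h \<and> Cod u = Dom m \<and> m \<cdot> u = h" if "t_char C m \<cdot> h = truth (Dom h)"
    using that pb h dom_char unfolding is_pullback_def t_truth_def
    by (metis cod_bang dom_bang dom_verum)
  show "t_char C m \<cdot> h = truth (Dom h)" if "\<exists>u. Dom u = Dom h \<and> Cod u = Dom m \<and> m \<cdot> u = h"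
  proof -
    from that obtain u where u: "Dom u = Dom h" "Cod u = Dom m" "m \<cdot> u = h"
      by blast
    then have "t_char C m \<cdot> h = (t_char C m \<cdot> m) \<cdot> u"
      using dom_char by simp
    also have "t_char C m \<cdot> m = truth (Dom m)"
      using pb unfolding is_pullback_def t_truth_def by simp
    finally show ?thesis
      using u by simp
  qed
qed

lemma equalizer_mono: "is_equalizer C e f g \<Longrightarrow> is_mono C e"
  unfolding is_mono_def
proof (intro allI impI)
  fix a b
  assume eq: "is_equalizer C e f g"
    and ab: "Cod a = Dom e \<and> Cod b = Dom e \<and> Dom a = Dom b \<and> e \<cdot> a = e \<cdot> b"
  then have "Cod (e \<cdot> a) = Dom f" and "f \<cdot> (e \<cdot> a) = g \<cdot> (e \<cdot> a)"
    unfolding is_equalizer_def by (auto simp flip: comp_assoc)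
  then have "\<exists>!u. Dom u = Dom (e \<cdot> a) \<and> Cod u = Dom e \<and> e \<cdot> u = e \<cdot> a"
    using eq unfolding is_equalizer_def by blast
  then show "a = b"
    using ab by (metis dom_comp)
qed

lemma equalizer_truth_pullback:
  assumes eq: "is_equalizer C e \<phi> (truth G)" and \<phi>: "Dom \<phi> = G" "Cod \<phi> = \<Omega>"
    and \<psi>: "Dom \<psi> = G" "Cod \<psi> = \<Omega>"
    and same: "\<And>k. Cod k = G \<Longrightarrow> \<phi> \<cdot> k = truth (Dom k) \<longleftrightarrow> \<psi> \<cdot> k = truth (Dom k)"
  shows "is_pullback C \<psi> verum e (bang (Dom e))"
proof -
  have cod_e: "Cod e = G" and "\<phi> \<cdot> e = truth G \<cdot> e"
    and univ: "\<And>h. Cod h = G \<Longrightarrow> \<phi> \<cdot> h = truth G \<cdot> h \<Longrightarrow>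
      \<exists>!u. Dom u = Dom h \<and> Cod u = Dom e \<and> e \<cdot> u = h"
    using eq \<phi> unfolding is_equalizer_def by auto
  then have "\<psi> \<cdot> e = truth (Dom e)"
    using same [of e] by simp
  then have square: "\<psi> \<cdot> e = verum \<cdot> bang (Dom e)"
    unfolding t_truth_def .
  have "\<exists>!u. Dom u = Dom p \<and> Cod u = Dom e \<and> e \<cdot> u = p \<and> bang (Dom e) \<cdot> u = q"
    if pq: "Dom p = Dom q" "Cod p = G" "Cod q = \<one>" "\<psi> \<cdot> p = verum \<cdot> q" for p q
  proof -
    have q: "q = bang (Dom p)"
      using pq bang_unique by simp
    then have "\<psi> \<cdot> p = truth (Dom p)"
      using pq unfolding t_truth_def by simp
    then have "\<phi> \<cdot> p = truth G \<cdot> p"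
      using same [of p] pq by simp
    then obtain u where u: "Dom u = Dom p" "Cod u = Dom e" "e \<cdot> u = p"
      and u_unique: "\<And>v. Dom v = Dom p \<and> Cod v = Dom e \<and> e \<cdot> v = p \<Longrightarrow> v = u"
      using univ [OF pq(2)] by metis
    have "bang (Dom e) \<cdot> u = q"
      using u q by simp
    then show ?thesis
      using u u_unique by (intro ex1I [of _ u]) blast+
  qed
  then show ?thesis
    unfolding is_pullback_def using cod_e \<psi> square by simp
qed

lemma predicate_ext:
  assumes "Dom \<phi> = G" "Cod \<phi> = \<Omega>" "Dom \<psi> = G" "Cod \<psi> = \<Omega>"
    and same: "\<And>k. Cod k = G \<Longrightarrow> \<phi> \<cdot> k = truth (Dom k) \<longleftrightarrow> \<psi> \<cdot> k = truth (Dom k)"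
  shows "\<phi> = \<psi>"
proof -
  have "\<exists>e. is_equalizer C e \<phi> (truth G)"
    using equalizers assms(1,2) unfolding has_equalizers_def by simp
  then obtain e where eq: "is_equalizer C e \<phi> (truth G)" ..
  then have mono: "is_mono C e"
    by (rule equalizer_mono)
  have "Cod e = G"
    using eq assms(1) unfolding is_equalizer_def by simp
  have "is_pullback C \<phi> verum e (bang (Dom e))" "is_pullback C \<psi> verum e (bang (Dom e))"
    using equalizer_truth_pullback [OF eq] assms by blast+
  then have "t_char C e = \<phi>" "t_char C e = \<psi>"
    using char_unique [OF mono] assms(1-4) \<open>Cod e = G\<close> by auto
  then show ?thesis
    by simp
qed

subsection \<open>Kripke--Joyal semantics of the connectives\<close>

lemma dom_conj_ar [simp]: "Dom (conj_ar C) = \<Omega> \<otimes> \<Omega>"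
  and cod_conj_ar [simp]: "Cod (conj_ar C) = \<Omega>"
  using char_classifies [OF mono_from_terminal [of "\<langle>verum, verum\<rangle>"]]
  unfolding conj_ar_def by auto

lemma dom_fAnd [simp]: "Dom \<phi> = Dom \<psi> \<Longrightarrow> Cod \<phi> = \<Omega> \<Longrightarrow> Cod \<psi> = \<Omega> \<Longrightarrow> Dom (fAnd C \<phi> \<psi>) = Dom \<phi>"
  and cod_fAnd [simp]: "Dom \<phi> = Dom \<psi> \<Longrightarrow> Cod \<phi> = \<Omega> \<Longrightarrow> Cod \<psi> = \<Omega> \<Longrightarrow> Cod (fAnd C \<phi> \<psi>) = \<Omega>"
  unfolding fAnd_def by auto

lemma fAnd_comp [simp]:
  "Dom \<phi> = Dom \<psi> \<Longrightarrow> Cod \<phi> = \<Omega> \<Longrightarrow> Cod \<psi> = \<Omega> \<Longrightarrow> Cod h = Dom \<phi> \<Longrightarrow>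
   fAnd C \<phi> \<psi> \<cdot> h = fAnd C (\<phi> \<cdot> h) (\<psi> \<cdot> h)"
  unfolding fAnd_def by simp

lemma fAnd_valid_iff:
  assumes "Dom \<phi> = D" "Dom \<psi> = D" "Cod \<phi> = \<Omega>" "Cod \<psi> = \<Omega>"
  shows "fAnd C \<phi> \<psi> = truth D \<longleftrightarrow> \<phi> = truth D \<and> \<psi> = truth D"
proof -
  have "fAnd C \<phi> \<psi> = truth D \<longleftrightarrow> (\<exists>u. Dom u = D \<and> Cod u = \<one> \<and> \<langle>verum, verum\<rangle> \<cdot> u = \<langle>\<phi>, \<psi>\<rangle>)"
    using char_comp_eq_truth_iff [OF mono_from_terminal, of "\<langle>verum, verum\<rangle>" "\<langle>\<phi>, \<psi>\<rangle>"] assms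
    unfolding fAnd_def conj_ar_def by simp
  also have "\<dots> \<longleftrightarrow> \<langle>truth D, truth D\<rangle> = \<langle>\<phi>, \<psi>\<rangle>"
    using bang_unique [of _ D] unfolding t_truth_def by (auto intro: exI [of _ "bang D"])
  also have "\<dots> \<longleftrightarrow> \<phi> = truth D \<and> \<psi> = truth D"
    using pair_inject [of "truth D" "truth D" \<phi> \<psi>] assms by auto
  finally show ?thesis .
qed

lemma diagonal_mono: "is_mono C \<langle>ident X, ident X\<rangle>"
  unfolding is_mono_def
proof (intro allI impI)
  fix g h
  assume gh: "Cod g = Dom \<langle>ident X, ident X\<rangle> \<and> Cod h = Dom \<langle>ident X, ident X\<rangle> \<and> Dom g = Dom h \<and>
    \<langle>ident X, ident X\<rangle> \<cdot> g = \<langle>ident X, ident X\<rangle> \<cdot> h"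
  then have "Cod g = X" "Cod h = X"
    by auto
  with gh have "\<langle>g, g\<rangle> = \<langle>h, h\<rangle>"
    by simp
  with gh \<open>Cod g = X\<close> \<open>Cod h = X\<close> show "g = h"
    using pair_inject [of g g h h] by simp
qed

lemma dom_eq_ar [simp]: "Dom (eq_ar C X) = X \<otimes> X"
  and cod_eq_ar [simp]: "Cod (eq_ar C X) = \<Omega>"
  using char_classifies [OF diagonal_mono [of X]] unfolding eq_ar_def by auto

lemma dom_fEq [simp]: "Dom s = Dom t \<Longrightarrow> Cod s = Cod t \<Longrightarrow> Dom (fEq C s t) = Dom s"
  and cod_fEq [simp]: "Dom s = Dom t \<Longrightarrow> Cod s = Cod t \<Longrightarrow> Cod (fEq C s t) = \<Omega>"
  unfolding fEq_def by auto

lemma fEq_comp [simp]: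
  "Dom s = Dom t \<Longrightarrow> Cod s = Cod t \<Longrightarrow> Cod h = Dom s \<Longrightarrow> fEq C s t \<cdot> h = fEq C (s \<cdot> h) (t \<cdot> h)"
  unfolding fEq_def by simp

lemma fEq_valid_iff:
  assumes "Dom s = D" "Dom t = D" "Cod s = Cod t"
  shows "fEq C s t = truth D \<longleftrightarrow> s = t"
proof -
  let ?\<delta> = "\<langle>ident (Cod s), ident (Cod s)\<rangle>"
  have "fEq C s t = truth D \<longleftrightarrow> (\<exists>u. Dom u = D \<and> Cod u = Cod s \<and> ?\<delta> \<cdot> u = \<langle>s, t\<rangle>)"
    using char_comp_eq_truth_iff [OF diagonal_mono, of "\<langle>s, t\<rangle>"] assms
    unfolding fEq_def eq_ar_def by simp
  also have "\<dots> \<longleftrightarrow> s = t"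
  proof
    assume "\<exists>u. Dom u = D \<and> Cod u = Cod s \<and> ?\<delta> \<cdot> u = \<langle>s, t\<rangle>"
    then obtain u where "Dom u = D" "Cod u = Cod s" "\<langle>u, u\<rangle> = \<langle>s, t\<rangle>"
      by auto
    then show "s = t"
      using pair_inject [of u u s t] assms by auto
  qed (use assms in auto)
  finally show ?thesis .
qed

text \<open>The implication arrow classifies the equalizer of \<open>\<and>\<close> and the first projection,
  i.e.\ the internal order on \<open>\<Omega>\<close>.\<close>

definition order_equalizer where
  "order_equalizer = (SOME e. is_equalizer C e (conj_ar C) (\<pi>\<^sub>1 \<Omega> \<Omega>))"

lemma order_equalizer: "is_equalizer C order_equalizer (conj_ar C) (\<pi>\<^sub>1 \<Omega> \<Omega>)"
proof -
  have "\<exists>e. is_equalizer C e (conj_ar C) (\<pi>\<^sub>1 \<Omega> \<Omega>)"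
    using equalizers unfolding has_equalizers_def by simp
  then show ?thesis
    unfolding order_equalizer_def by (rule someI_ex)
qed

lemma cod_order_equalizer: "Cod order_equalizer = \<Omega> \<otimes> \<Omega>"
  using order_equalizer unfolding is_equalizer_def by simp

lemma dom_imp_ar [simp]: "Dom (imp_ar C) = \<Omega> \<otimes> \<Omega>"
  and cod_imp_ar [simp]: "Cod (imp_ar C) = \<Omega>"
  using char_classifies [OF equalizer_mono [OF order_equalizer]] cod_order_equalizer
  unfolding imp_ar_def order_equalizer_def [symmetric] by auto

lemma dom_fImp [simp]: "Dom \<phi> = Dom \<psi> \<Longrightarrow> Cod \<phi> = \<Omega> \<Longrightarrow> Cod \<psi> = \<Omega> \<Longrightarrow> Dom (fImp C \<phi> \<psi>) = Dom \<phi>"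
  and cod_fImp [simp]: "Dom \<phi> = Dom \<psi> \<Longrightarrow> Cod \<phi> = \<Omega> \<Longrightarrow> Cod \<psi> = \<Omega> \<Longrightarrow> Cod (fImp C \<phi> \<psi>) = \<Omega>"
  unfolding fImp_def by auto

lemma fImp_comp [simp]:
  "Dom \<phi> = Dom \<psi> \<Longrightarrow> Cod \<phi> = \<Omega> \<Longrightarrow> Cod \<psi> = \<Omega> \<Longrightarrow> Cod h = Dom \<phi> \<Longrightarrow>
   fImp C \<phi> \<psi> \<cdot> h = fImp C (\<phi> \<cdot> h) (\<psi> \<cdot> h)"
  unfolding fImp_def by simp

lemma fImp_valid_iff_fAnd_eq:
  assumes "Dom \<phi> = D" "Dom \<psi> = D" "Cod \<phi> = \<Omega>" "Cod \<psi> = \<Omega>"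
  shows "fImp C \<phi> \<psi> = truth D \<longleftrightarrow> fAnd C \<phi> \<psi> = \<phi>"
proof -
  let ?e = order_equalizer
  have eq: "?e \<cdot> u = \<langle>\<phi>, \<psi>\<rangle> \<Longrightarrow> Cod u = Dom ?e \<Longrightarrow> conj_ar C \<cdot> \<langle>\<phi>, \<psi>\<rangle> = \<pi>\<^sub>1 \<Omega> \<Omega> \<cdot> \<langle>\<phi>, \<psi>\<rangle>" for u
    using order_equalizer cod_order_equalizer unfolding is_equalizer_def
    by (metis comp_assoc dom_conj_ar dom_pi1)
  have univ: "conj_ar C \<cdot> \<langle>\<phi>, \<psi>\<rangle> = \<pi>\<^sub>1 \<Omega> \<Omega> \<cdot> \<langle>\<phi>, \<psi>\<rangle> \<Longrightarrow>
      \<exists>u. Dom u = D \<and> Cod u = Dom ?e \<and> ?e \<cdot> u = \<langle>\<phi>, \<psi>\<rangle>"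
    using order_equalizer assms unfolding is_equalizer_def by (metis cod_pair dom_conj_ar dom_pair)
  have "fImp C \<phi> \<psi> = truth D \<longleftrightarrow> (\<exists>u. Dom u = D \<and> Cod u = Dom ?e \<and> ?e \<cdot> u = \<langle>\<phi>, \<psi>\<rangle>)"
    using char_comp_eq_truth_iff [OF equalizer_mono [OF order_equalizer], of "\<langle>\<phi>, \<psi>\<rangle>"]
      assms cod_order_equalizer
    unfolding fImp_def imp_ar_def order_equalizer_def [symmetric] by simp
  also have "\<dots> \<longleftrightarrow> conj_ar C \<cdot> \<langle>\<phi>, \<psi>\<rangle> = \<pi>\<^sub>1 \<Omega> \<Omega> \<cdot> \<langle>\<phi>, \<psi>\<rangle>"
    using eq univ by blast
  also have "\<dots> \<longleftrightarrow> fAnd C \<phi> \<psi> = \<phi>"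
    using assms unfolding fAnd_def by simp
  finally show ?thesis .
qed

lemma fImp_valid_iff:
  assumes types: "Dom \<phi> = D" "Dom \<psi> = D" "Cod \<phi> = \<Omega>" "Cod \<psi> = \<Omega>"
  shows "fImp C \<phi> \<psi> = truth D \<longleftrightarrow>
    (\<forall>k. Cod k = D \<longrightarrow> \<phi> \<cdot> k = truth (Dom k) \<longrightarrow> \<psi> \<cdot> k = truth (Dom k))"
  unfolding fImp_valid_iff_fAnd_eq [OF types]
proof
  assume conj: "fAnd C \<phi> \<psi> = \<phi>"
  show "\<forall>k. Cod k = D \<longrightarrow> \<phi> \<cdot> k = truth (Dom k) \<longrightarrow> \<psi> \<cdot> k = truth (Dom k)"
  proof (intro allI impI)
    fix k
    assume k: "Cod k = D" "\<phi> \<cdot> k = truth (Dom k)"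
    then have "fAnd C (\<phi> \<cdot> k) (\<psi> \<cdot> k) = truth (Dom k)"
      using conj types by (metis fAnd_comp)
    then show "\<psi> \<cdot> k = truth (Dom k)"
      using fAnd_valid_iff [of "\<phi> \<cdot> k" "Dom k" "\<psi> \<cdot> k"] k types by simp
  qed
next
  assume "\<forall>k. Cod k = D \<longrightarrow> \<phi> \<cdot> k = truth (Dom k) \<longrightarrow> \<psi> \<cdot> k = truth (Dom k)"
  then show "fAnd C \<phi> \<psi> = \<phi>"
    using types by (intro predicate_ext [of _ D]) (auto simp: fAnd_valid_iff)
qed

lemma dom_all_ar [simp]: "Dom (all_ar C X) = Exp X \<Omega>"
  and cod_all_ar [simp]: "Cod (all_ar C X) = \<Omega>"
  using char_classifies [OF mono_from_terminal [of "\<Lambda> \<one> X (truth (\<one> \<otimes> X))"]]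
  unfolding all_ar_def by auto

lemma dom_fAll [simp]: "Dom \<phi> = G \<otimes> X \<Longrightarrow> Cod \<phi> = \<Omega> \<Longrightarrow> Dom (fAll C G X \<phi>) = G"
  and cod_fAll [simp]: "Dom \<phi> = G \<otimes> X \<Longrightarrow> Cod \<phi> = \<Omega> \<Longrightarrow> Cod (fAll C G X \<phi>) = \<Omega>"
  unfolding fAll_def by auto

lemma fAll_comp [simp]:
  "Dom \<phi> = G \<otimes> X \<Longrightarrow> Cod \<phi> = \<Omega> \<Longrightarrow> Cod h = G \<Longrightarrow>
   fAll C G X \<phi> \<cdot> h = fAll C (Dom h) X (\<phi> \<cdot> \<langle>h \<cdot> \<pi>\<^sub>1 (Dom h) X, \<pi>\<^sub>2 (Dom h) X\<rangle>)"
  unfolding fAll_def by (simp add: Lambda_comp)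

lemma fAll_valid_iff:
  assumes "Dom \<phi> = G \<otimes> X" "Cod \<phi> = \<Omega>"
  shows "fAll C G X \<phi> = truth G \<longleftrightarrow> \<phi> = truth (G \<otimes> X)"
proof -
  let ?m = "\<Lambda> \<one> X (truth (\<one> \<otimes> X))"
  have "?m \<cdot> bang G = \<Lambda> G X (truth (G \<otimes> X))"
    by (simp add: Lambda_comp)
  then have "fAll C G X \<phi> = truth G \<longleftrightarrow> \<Lambda> G X (truth (G \<otimes> X)) = \<Lambda> G X \<phi>"
    using char_comp_eq_truth_iff [OF mono_from_terminal, of ?m "\<Lambda> G X \<phi>"] assms bang_unique [of _ G]
    unfolding fAll_def all_ar_def by (auto intro: exI [of _ "bang G"])
  also have "\<dots> \<longleftrightarrow> \<phi> = truth (G \<otimes> X)"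
    using Lambda_inject [of \<phi> G X "truth (G \<otimes> X)"] assms by auto
  finally show ?thesis .
qed

lemma dom_fApp [simp]: "Dom a = Dom t \<Longrightarrow> Cod a = Exp X \<Omega> \<Longrightarrow> Cod t = X \<Longrightarrow> Dom (fApp C X a t) = Dom a"
  and cod_fApp [simp]: "Dom a = Dom t \<Longrightarrow> Cod a = Exp X \<Omega> \<Longrightarrow> Cod t = X \<Longrightarrow> Cod (fApp C X a t) = \<Omega>"
  unfolding fApp_def by auto

lemma fApp_comp [simp]:
  "Dom a = Dom t \<Longrightarrow> Cod a = Exp X \<Omega> \<Longrightarrow> Cod t = X \<Longrightarrow> Cod h = Dom a \<Longrightarrow>
   fApp C X a t \<cdot> h = fApp C X (a \<cdot> h) (t \<cdot> h)"
  unfolding fApp_def by simp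

lemma fAll_fImp_valid_iff:
  assumes types: "Dom \<phi> = G \<otimes> X" "Dom \<psi> = G \<otimes> X" "Cod \<phi> = \<Omega>" "Cod \<psi> = \<Omega>"
  shows "fAll C G X (fImp C \<phi> \<psi>) = truth G \<longleftrightarrow>
    (\<forall>h s. Cod h = G \<longrightarrow> Dom s = Dom h \<longrightarrow> Cod s = X \<longrightarrow>
      \<phi> \<cdot> \<langle>h, s\<rangle> = truth (Dom h) \<longrightarrow> \<psi> \<cdot> \<langle>h, s\<rangle> = truth (Dom h))"
  using types
  by (simp add: fAll_valid_iff fImp_valid_iff
      all_points_prod [where P = "\<lambda>r. \<phi> \<cdot> r = truth (Dom r) \<longrightarrow> \<psi> \<cdot> r = truth (Dom r)"])

lemma fAll_fAll_fImp_valid_iff: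
  assumes types: "Dom \<phi> = G \<otimes> X \<otimes> Y" "Dom \<psi> = G \<otimes> X \<otimes> Y" "Cod \<phi> = \<Omega>" "Cod \<psi> = \<Omega>"
  shows "fAll C G X (fAll C (G \<otimes> X) Y (fImp C \<phi> \<psi>)) = truth G \<longleftrightarrow>
    (\<forall>h s t. Cod h = G \<longrightarrow> Dom s = Dom h \<longrightarrow> Dom t = Dom h \<longrightarrow> Cod s = X \<longrightarrow> Cod t = Y \<longrightarrow>
      \<phi> \<cdot> \<langle>\<langle>h, s\<rangle>, t\<rangle> = truth (Dom h) \<longrightarrow> \<psi> \<cdot> \<langle>\<langle>h, s\<rangle>, t\<rangle> = truth (Dom h))"
  using types
  by (simp add: fAll_valid_iff fImp_valid_iff
      all_points_prod_prod [where P = "\<lambda>r. \<phi> \<cdot> r = truth (Dom r) \<longrightarrow> \<psi> \<cdot> r = truth (Dom r)"])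

subsection \<open>Contractive maps are non-expansive\<close>

lemma strong_loeb_rule:
  assumes "strong_loeb C L" and L: "Dom L = \<Omega>" "Cod L = \<Omega>"
    and q: "Dom q = D" "Cod q = \<Omega>" and step: "fImp C (L \<cdot> q) q = truth D"
  shows "q = truth D"
proof -
  let ?p = "\<pi>\<^sub>2 \<one> \<Omega>"
  have types: "Dom (fImp C (L \<cdot> ?p) ?p) = \<one> \<otimes> \<Omega>" "Dom ?p = \<one> \<otimes> \<Omega>"
    "Cod (fImp C (L \<cdot> ?p) ?p) = \<Omega>" "Cod ?p = \<Omega>"
    using L by simp_all
  have "fAll C \<one> \<Omega> (fImp C (fImp C (L \<cdot> ?p) ?p) ?p) = truth \<one>"
    using assms(1) unfolding strong_loeb_def Let_def holds_iff .
  then have "\<forall>h s. Cod h = \<one> \<longrightarrow> Dom s = Dom h \<longrightarrow> Cod s = \<Omega> \<longrightarrow>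
      fImp C (L \<cdot> ?p) ?p \<cdot> \<langle>h, s\<rangle> = truth (Dom h) \<longrightarrow> ?p \<cdot> \<langle>h, s\<rangle> = truth (Dom h)"
    unfolding fAll_fImp_valid_iff [OF types] .
  from this [rule_format, of "bang D" q] show ?thesis
    using L q step by simp
qed

lemma contractiveD:
  assumes "contractive C L f" and L: "Dom L = \<Omega>" "Cod L = \<Omega>" and f: "Dom f = X" "Cod f = X"
    and ab: "Dom a = D" "Dom b = D" "Cod a = X" "Cod b = X" and later: "L \<cdot> fEq C a b = truth D"
  shows "f \<cdot> a = f \<cdot> b"
proof -
  let ?x = "\<pi>\<^sub>2 \<one> X \<cdot> \<pi>\<^sub>1 (\<one> \<otimes> X) X" and ?y = "\<pi>\<^sub>2 (\<one> \<otimes> X) X"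
  have types: "Dom (L \<cdot> fEq C ?x ?y) = \<one> \<otimes> X \<otimes> X" "Dom (fEq C (f \<cdot> ?x) (f \<cdot> ?y)) = \<one> \<otimes> X \<otimes> X"
    "Cod (L \<cdot> fEq C ?x ?y) = \<Omega>" "Cod (fEq C (f \<cdot> ?x) (f \<cdot> ?y)) = \<Omega>"
    using L f by simp_all
  have "fAll C \<one> X (fAll C (\<one> \<otimes> X) X (fImp C (L \<cdot> fEq C ?x ?y) (fEq C (f \<cdot> ?x) (f \<cdot> ?y)))) = truth \<one>"
    using assms(1) f unfolding contractive_def Let_def holds_iff by simp
  then have "\<forall>h s t. Cod h = \<one> \<longrightarrow> Dom s = Dom h \<longrightarrow> Dom t = Dom h \<longrightarrow> Cod s = X \<longrightarrow> Cod t = X \<longrightarrow>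
      (L \<cdot> fEq C ?x ?y) \<cdot> \<langle>\<langle>h, s\<rangle>, t\<rangle> = truth (Dom h) \<longrightarrow>
      fEq C (f \<cdot> ?x) (f \<cdot> ?y) \<cdot> \<langle>\<langle>h, s\<rangle>, t\<rangle> = truth (Dom h)"
    unfolding fAll_fAll_fImp_valid_iff [OF types] .
  from this [rule_format, of "bang D" a b] have "fEq C (f \<cdot> a) (f \<cdot> b) = truth D"
    using L f ab later by simp
  then show ?thesis
    using fEq_valid_iff f ab by simp
qed

lemma fImp_fEq_valid_iff:
  assumes "Dom s = D" "Dom t = D" "Dom u = D" "Dom v = D" "Cod s = Cod t" "Cod u = Cod v"
  shows "fImp C (fEq C s t) (fEq C u v) = truth D \<longleftrightarrow>
    (\<forall>j. Cod j = D \<longrightarrow> s \<cdot> j = t \<cdot> j \<longrightarrow> u \<cdot> j = v \<cdot> j)"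
  using assms by (simp add: fImp_valid_iff fEq_valid_iff)

lemma nonexpansive_iff:
  assumes f: "Dom f = X" "Cod f = X"
  shows "nonexpansive C f \<longleftrightarrow>
    (\<forall>a b. Dom a = Dom b \<longrightarrow> Cod a = X \<longrightarrow> Cod b = X \<longrightarrow>
      (\<forall>j. Cod j = Dom a \<longrightarrow> f \<cdot> (a \<cdot> j) = f \<cdot> (b \<cdot> j) \<longrightarrow> a \<cdot> j = b \<cdot> j) \<longrightarrow> a = b)"
    (is "_ \<longleftrightarrow> (\<forall>a b. ?P a b)")
proof -
  let ?x = "\<pi>\<^sub>2 \<one> X \<cdot> \<pi>\<^sub>1 (\<one> \<otimes> X) X" and ?y = "\<pi>\<^sub>2 (\<one> \<otimes> X) X"
  have types: "Dom (fImp C (fEq C (f \<cdot> ?x) (f \<cdot> ?y)) (fEq C ?x ?y)) = \<one> \<otimes> X \<otimes> X"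
    "Dom (fEq C ?x ?y) = \<one> \<otimes> X \<otimes> X"
    "Cod (fImp C (fEq C (f \<cdot> ?x) (f \<cdot> ?y)) (fEq C ?x ?y)) = \<Omega>" "Cod (fEq C ?x ?y) = \<Omega>"
    using f by simp_all
  have "nonexpansive C f \<longleftrightarrow>
    (\<forall>h a b. Cod h = \<one> \<longrightarrow> Dom a = Dom h \<longrightarrow> Dom b = Dom h \<longrightarrow> Cod a = X \<longrightarrow> Cod b = X \<longrightarrow>
      fImp C (fEq C (f \<cdot> ?x) (f \<cdot> ?y)) (fEq C ?x ?y) \<cdot> \<langle>\<langle>h, a\<rangle>, b\<rangle> = truth (Dom h) \<longrightarrow>
      fEq C ?x ?y \<cdot> \<langle>\<langle>h, a\<rangle>, b\<rangle> = truth (Dom h))"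
    using f unfolding nonexpansive_def Let_def holds_iff fAll_fAll_fImp_valid_iff [OF types, symmetric]
    by simp
  also have "\<dots> \<longleftrightarrow>
    (\<forall>h a b. Cod h = \<one> \<longrightarrow> Dom a = Dom h \<longrightarrow> Dom b = Dom h \<longrightarrow> Cod a = X \<longrightarrow> Cod b = X \<longrightarrow>
      fImp C (fEq C (f \<cdot> a) (f \<cdot> b)) (fEq C a b) = truth (Dom h) \<longrightarrow> a = b)"
    using f by (simp add: fEq_valid_iff)
  also have "\<dots> \<longleftrightarrow>
    (\<forall>a b. Dom a = Dom b \<longrightarrow> Cod a = X \<longrightarrow> Cod b = X \<longrightarrow>
      fImp C (fEq C (f \<cdot> a) (f \<cdot> b)) (fEq C a b) = truth (Dom a) \<longrightarrow> a = b)"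
    by (metis cod_bang dom_bang)
  also have "\<dots> \<longleftrightarrow> (\<forall>a b. ?P a b)"
    using f by (simp add: fImp_fEq_valid_iff)
  finally show ?thesis .
qed

theorem contractive_imp_nonexpansive:
  assumes loeb: "strong_loeb C L" and L: "Dom L = \<Omega>" "Cod L = \<Omega>"
    and f: "Dom f = X" "Cod f = X" and contr: "contractive C L f"
  shows "nonexpansive C f"
  unfolding nonexpansive_iff [OF f]
proof (intro allI impI)
  fix a b
  assume ab: "Dom a = Dom b" "Cod a = X" "Cod b = X"
    and hyp: "\<forall>j. Cod j = Dom a \<longrightarrow> f \<cdot> (a \<cdot> j) = f \<cdot> (b \<cdot> j) \<longrightarrow> a \<cdot> j = b \<cdot> j"
  let ?q = "fEq C a b"
  have types: "Dom (L \<cdot> ?q) = Dom a" "Dom ?q = Dom a" "Cod (L \<cdot> ?q) = \<Omega>" "Cod ?q = \<Omega>"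
    using ab L by simp_all
  have "fImp C (L \<cdot> ?q) ?q = truth (Dom a)"
    unfolding fImp_valid_iff [OF types]
  proof (intro allI impI)
    fix k
    assume k: "Cod k = Dom a" "(L \<cdot> ?q) \<cdot> k = truth (Dom k)"
    then have "L \<cdot> fEq C (a \<cdot> k) (b \<cdot> k) = truth (Dom k)"
      using ab L by simp
    then have "f \<cdot> (a \<cdot> k) = f \<cdot> (b \<cdot> k)"
      using contractiveD [OF contr L f] ab k by simp
    with hyp k(1) have "a \<cdot> k = b \<cdot> k"
      by blast
    then show "?q \<cdot> k = truth (Dom k)"
      using k ab by (simp add: fEq_valid_iff)
  qed
  then have "?q = truth (Dom a)"
    by (rule strong_loeb_rule [OF loeb L types(2,4)])
  then show "a = b"
    using ab by (simp add: fEq_valid_iff)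
qed

subsection \<open>Fixed points of non-expansive maps\<close>

lemma dom_SubTe [simp]: "Dom a = G \<Longrightarrow> Cod a = Exp X \<Omega> \<Longrightarrow> Dom (SubTe C G X a) = G"
  and cod_SubTe [simp]: "Dom a = G \<Longrightarrow> Cod a = Exp X \<Omega> \<Longrightarrow> Cod (SubTe C G X a) = \<Omega>"
  unfolding SubTe_def Let_def by simp_all

lemma SubTe_comp [simp]:
  "Dom a = G \<Longrightarrow> Cod a = Exp X \<Omega> \<Longrightarrow> Cod k = G \<Longrightarrow> SubTe C G X a \<cdot> k = SubTe C (Dom k) X (a \<cdot> k)"
  unfolding SubTe_def Let_def by simp

lemma dom_SubsetF [simp]:
  "Dom a = G \<Longrightarrow> Dom b = G \<Longrightarrow> Cod a = Exp X \<Omega> \<Longrightarrow> Cod b = Exp X \<Omega> \<Longrightarrow> Dom (SubsetF C G X a b) = G"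
  and cod_SubsetF [simp]:
  "Dom a = G \<Longrightarrow> Dom b = G \<Longrightarrow> Cod a = Exp X \<Omega> \<Longrightarrow> Cod b = Exp X \<Omega> \<Longrightarrow> Cod (SubsetF C G X a b) = \<Omega>"
  unfolding SubsetF_def Let_def by simp_all

lemma SubsetF_comp [simp]:
  "Dom a = G \<Longrightarrow> Dom b = G \<Longrightarrow> Cod a = Exp X \<Omega> \<Longrightarrow> Cod b = Exp X \<Omega> \<Longrightarrow> Cod k = G \<Longrightarrow>
   SubsetF C G X a b \<cdot> k = SubsetF C (Dom k) X (a \<cdot> k) (b \<cdot> k)"
  unfolding SubsetF_def Let_def by simp

lemma SubTe_valid_iff:
  assumes a: "Dom a = G" "Cod a = Exp X \<Omega>"
  shows "SubTe C G X a = truth G \<longleftrightarrow>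
    (\<forall>h s t. Cod h = G \<longrightarrow> Dom s = Dom h \<longrightarrow> Dom t = Dom h \<longrightarrow> Cod s = X \<longrightarrow> Cod t = X \<longrightarrow>
      fApp C X (a \<cdot> h) s = truth (Dom h) \<longrightarrow> fApp C X (a \<cdot> h) t = truth (Dom h) \<longrightarrow> s = t)"
proof -
  let ?x = "\<pi>\<^sub>2 G X \<cdot> \<pi>\<^sub>1 (G \<otimes> X) X" and ?y = "\<pi>\<^sub>2 (G \<otimes> X) X"
    and ?a = "(a \<cdot> \<pi>\<^sub>1 G X) \<cdot> \<pi>\<^sub>1 (G \<otimes> X) X"
  have types: "Dom (fAnd C (fApp C X ?a ?x) (fApp C X ?a ?y)) = G \<otimes> X \<otimes> X"
    "Dom (fEq C ?x ?y) = G \<otimes> X \<otimes> X"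
    "Cod (fAnd C (fApp C X ?a ?x) (fApp C X ?a ?y)) = \<Omega>" "Cod (fEq C ?x ?y) = \<Omega>"
    using a by simp_all
  show ?thesis
    unfolding SubTe_def Let_def fAll_fAll_fImp_valid_iff [OF types]
    using a by (simp add: fAnd_valid_iff fEq_valid_iff imp_conjL)
qed

lemma SubsetF_valid_iff:
  assumes ab: "Dom a = G" "Dom b = G" "Cod a = Exp X \<Omega>" "Cod b = Exp X \<Omega>"
  shows "SubsetF C G X a b = truth G \<longleftrightarrow>
    (\<forall>h s. Cod h = G \<longrightarrow> Dom s = Dom h \<longrightarrow> Cod s = X \<longrightarrow>
      fApp C X (a \<cdot> h) s = truth (Dom h) \<longrightarrow> fApp C X (b \<cdot> h) s = truth (Dom h))"
proof -
  have types: "Dom (fApp C X (a \<cdot> \<pi>\<^sub>1 G X) (\<pi>\<^sub>2 G X)) = G \<otimes> X"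
    "Dom (fApp C X (b \<cdot> \<pi>\<^sub>1 G X) (\<pi>\<^sub>2 G X)) = G \<otimes> X"
    "Cod (fApp C X (a \<cdot> \<pi>\<^sub>1 G X) (\<pi>\<^sub>2 G X)) = \<Omega>" "Cod (fApp C X (b \<cdot> \<pi>\<^sub>1 G X) (\<pi>\<^sub>2 G X)) = \<Omega>"
    using ab by simp_all
  show ?thesis
    unfolding SubsetF_def Let_def fAll_fImp_valid_iff [OF types]
    using ab by simp
qed

lemma MaxST_valid_iff:
  assumes a: "Dom a = G" "Cod a = Exp X \<Omega>"
  shows "MaxST C G X a = truth G \<longleftrightarrow> SubTe C G X a = truth G \<and>
    (\<forall>h \<alpha>. Cod h = G \<longrightarrow> Dom \<alpha> = Dom h \<longrightarrow> Cod \<alpha> = Exp X \<Omega> \<longrightarrow>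
      SubTe C (Dom h) X \<alpha> = truth (Dom h) \<longrightarrow> SubsetF C (Dom h) X (a \<cdot> h) \<alpha> = truth (Dom h) \<longrightarrow>
      SubsetF C (Dom h) X \<alpha> (a \<cdot> h) = truth (Dom h))"
proof -
  let ?P = "Exp X \<Omega>"
  let ?\<alpha> = "\<pi>\<^sub>2 G ?P" and ?a = "a \<cdot> \<pi>\<^sub>1 G ?P"
  let ?hyp = "fAnd C (SubTe C (G \<otimes> ?P) X ?\<alpha>) (SubsetF C (G \<otimes> ?P) X ?a ?\<alpha>)"
    and ?concl = "SubsetF C (G \<otimes> ?P) X ?\<alpha> ?a"
  have types: "Dom ?hyp = G \<otimes> ?P" "Dom ?concl = G \<otimes> ?P" "Cod ?hyp = \<Omega>" "Cod ?concl = \<Omega>"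
    using a by simp_all
  have types': "Dom (SubTe C G X a) = G" "Dom (fAll C G ?P (fImp C ?hyp ?concl)) = G"
    "Cod (SubTe C G X a) = \<Omega>" "Cod (fAll C G ?P (fImp C ?hyp ?concl)) = \<Omega>"
    using a types by simp_all
  show ?thesis
    unfolding MaxST_def Let_def fAnd_valid_iff [OF types'] fAll_fImp_valid_iff [OF types]
    using a by (simp add: fAnd_valid_iff imp_conjL)
qed

lemma dom_fixpred [simp]: "Dom f = X \<Longrightarrow> Cod f = X \<Longrightarrow> Dom (fixpred C f) = \<one>"
  and cod_fixpred [simp]: "Dom f = X \<Longrightarrow> Cod f = X \<Longrightarrow> Cod (fixpred C f) = Exp X \<Omega>"
  unfolding fixpred_def Let_def by simp_all

lemma fixpred_valid_iff:
  assumes f: "Dom f = X" "Cod f = X" and hs: "Cod h = \<one>" "Dom s = Dom h" "Cod s = X"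
  shows "fApp C X (fixpred C f \<cdot> h) s = truth (Dom h) \<longleftrightarrow> f \<cdot> s = s"
proof -
  have "fApp C X (fixpred C f \<cdot> h) s = fEq C s (f \<cdot> s)"
    unfolding fixpred_def Let_def fApp_def using f hs by simp
  then show ?thesis
    using f hs by (auto simp: fEq_valid_iff)
qed

lemma nonexpansive_eqI:
  assumes "nonexpansive C f" and f: "Dom f = X" "Cod f = X"
    and ab: "Dom a = Dom b" "Cod a = X" "Cod b = X"
    and step: "\<And>j. Cod j = Dom a \<Longrightarrow> f \<cdot> (a \<cdot> j) = f \<cdot> (b \<cdot> j) \<Longrightarrow> a \<cdot> j = b \<cdot> j"
  shows "a = b"
  using assms(1) ab step unfolding nonexpansive_iff [OF f] by blast

lemma nonexpansive_fixed_point_unique: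
  assumes ne: "nonexpansive C f" and f: "Dom f = X" "Cod f = X"
    and st: "Dom s = Dom t" "Cod s = X" "Cod t = X" and fixed: "f \<cdot> s = s" "f \<cdot> t = t"
  shows "s = t"
proof (rule nonexpansive_eqI [OF ne f st])
  fix j
  assume "Cod j = Dom s" "f \<cdot> (s \<cdot> j) = f \<cdot> (t \<cdot> j)"
  then show "s \<cdot> j = t \<cdot> j"
    using f st fixed by (metis comp_assoc)
qed

lemma nonexpansive_subterminal_element_fixed:
  assumes ne: "nonexpansive C f" and f: "Dom f = X" "Cod f = X"
    and \<alpha>: "Dom \<alpha> = D" "Cod \<alpha> = Exp X \<Omega>" and sub: "SubTe C D X \<alpha> = truth D"
    and fixed_in: "\<And>h s. Cod h = D \<Longrightarrow> Dom s = Dom h \<Longrightarrow> Cod s = X \<Longrightarrow> f \<cdot> s = s \<Longrightarrow>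
      fApp C X (\<alpha> \<cdot> h) s = truth (Dom h)"
    and hs: "Cod h = D" "Dom s = Dom h" "Cod s = X" and in_\<alpha>: "fApp C X (\<alpha> \<cdot> h) s = truth (Dom h)"
  shows "f \<cdot> s = s"
proof (rule nonexpansive_eqI [OF ne f])
  fix j
  assume j: "Cod j = Dom (f \<cdot> s)" "f \<cdot> ((f \<cdot> s) \<cdot> j) = f \<cdot> (s \<cdot> j)"
  let ?u = "f \<cdot> (s \<cdot> j)"
  have u: "Cod j = Dom h" "Dom ?u = Dom j" "Cod ?u = X" "f \<cdot> ?u = ?u"
    using j hs f by simp_all
  have u_in: "fApp C X (\<alpha> \<cdot> (h \<cdot> j)) ?u = truth (Dom j)"
    using fixed_in [of "h \<cdot> j" ?u] hs u by simp
  have s_in: "fApp C X (\<alpha> \<cdot> (h \<cdot> j)) (s \<cdot> j) = truth (Dom j)"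
  proof -
    have "fApp C X (\<alpha> \<cdot> h) s \<cdot> j = truth (Dom j)"
      using in_\<alpha> u(1) by simp
    then show ?thesis
      using hs u \<alpha> by simp
  qed
  have unique: "\<forall>h s t. Cod h = D \<longrightarrow> Dom s = Dom h \<longrightarrow> Dom t = Dom h \<longrightarrow> Cod s = X \<longrightarrow> Cod t = X \<longrightarrow>
      fApp C X (\<alpha> \<cdot> h) s = truth (Dom h) \<longrightarrow> fApp C X (\<alpha> \<cdot> h) t = truth (Dom h) \<longrightarrow> s = t"
    using sub unfolding SubTe_valid_iff [OF \<alpha>] .
  have "?u = s \<cdot> j"
    by (rule unique [rule_format, of "h \<cdot> j"]) (use hs u u_in s_in in simp_all)
  then show "(f \<cdot> s) \<cdot> j = s \<cdot> j"
    using hs u f by simp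
qed (use hs f in simp_all)

theorem nonexpansive_MaxST_fixpred:
  assumes ne: "nonexpansive C f" and f: "Dom f = X" "Cod f = X"
  shows "holds C (MaxST C \<one> X (fixpred C f))"
  unfolding holds_iff MaxST_valid_iff [OF dom_fixpred [OF f] cod_fixpred [OF f]]
proof (intro conjI allI impI)
  show "SubTe C \<one> X (fixpred C f) = truth \<one>"
    unfolding SubTe_valid_iff [OF dom_fixpred [OF f] cod_fixpred [OF f]]
    using nonexpansive_fixed_point_unique [OF ne f] f by (simp add: fixpred_valid_iff)
next
  fix g \<alpha>
  assume g: "Cod g = \<one>" "Dom \<alpha> = Dom g" "Cod \<alpha> = Exp X \<Omega>"
    and sub: "SubTe C (Dom g) X \<alpha> = truth (Dom g)"
    and incl: "SubsetF C (Dom g) X (fixpred C f \<cdot> g) \<alpha> = truth (Dom g)"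
  have P: "Dom (fixpred C f \<cdot> g) = Dom g" "Cod (fixpred C f \<cdot> g) = Exp X \<Omega>"
    using f g by simp_all
  have fixed_in: "fApp C X (\<alpha> \<cdot> h) s = truth (Dom h)"
    if hs: "Cod h = Dom g" "Dom s = Dom h" "Cod s = X" "f \<cdot> s = s" for h s
  proof -
    have "fApp C X ((fixpred C f \<cdot> g) \<cdot> h) s = truth (Dom h)"
      using fixpred_valid_iff [of f X "g \<cdot> h" s] hs f g by simp
    with incl hs(1-3) show ?thesis
      unfolding SubsetF_valid_iff [OF P(1) g(2) P(2) g(3)] by blast
  qed
  show "SubsetF C (Dom g) X \<alpha> (fixpred C f \<cdot> g) = truth (Dom g)"
    unfolding SubsetF_valid_iff [OF g(2) P(1) g(3) P(2)]
  proof (intro allI impI)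
    fix h s
    assume hs: "Cod h = Dom g" "Dom s = Dom h" "Cod s = X" "fApp C X (\<alpha> \<cdot> h) s = truth (Dom h)"
    have "f \<cdot> s = s"
      by (rule nonexpansive_subterminal_element_fixed [OF ne f g(2,3) sub fixed_in hs])
    then show "fApp C X ((fixpred C f \<cdot> g) \<cdot> h) s = truth (Dom h)"
      using fixpred_valid_iff [of f X "g \<cdot> h" s] hs f g by simp
  qed
qed

end

theorem corollary5p11:
  fixes C :: "('o, 'a) topos_sig" and L f :: 'a and X :: 'o
  assumes "elementary_topos C"
    and "t_dom C L = t_Omega C" and "t_cod C L = t_Omega C"
    and "strong_loeb C L"
    and "t_dom C f = X" and "t_cod C f = X"
    and "contractive C L f"
  shows "nonexpansive C f \<and> holds C (MaxST C (t_one C) X (fixpred C f))"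
proof -
  interpret topos C
    by unfold_locales (rule assms(1))
  have "nonexpansive C f"
    using contractive_imp_nonexpansive assms(2-7) by blast
  with nonexpansive_MaxST_fixpred assms(5,6) show ?thesis
    by blast
qed

end
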